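(* Let $n\ge 3$ and let $F$ be a minimal set of faulty edges of $Q_n$. Let $T$ be a set disconnected halfway with respect to $F$ such that no proper subset of $T$ is disconnected halfway with respect to $F$. Then: (1) if $|T|=4$, then $T$ is the vertex set of a 2-dimensional subcube (a 4-cycle of $Q_n$); (2) if $|T|=6$, then the subgraph of $Q_n$ induced by $T$ contains a cycle of length 6; (3) if $|T|=8$, then either the subgraph induced by $T$ contains a cycle of length 8, or $Q_n-F$ contains a CL trap.
   Context: $Q_n$ is the $n$-dimensional hypercube on the binary strings of length $n$, two strings adjacent iff they differ in exactly one bit; a $k$-dimensional subcube is the set of vertices obtained by fixing $n-k$ coordinates. The parity of a vertex is the number of ones in its label modulo 2; $|T|_0,|T|_1$ denote the numbers of parity-0 and parity-1 vertices of $T$. $F$ is a set of "faulty" edges and $Q_n-F$ is the graph on all vertices of $Q_n$ with the edges of $Q_n$ not in $F$ (the "healthy" edges). $F$ is minimal if $Q_n-F$ has no Hamiltonian cycle but $Q_n-F'$ has one for every proper subset $F'\subsetneq F$. A nonempty proper subset $T$ of the vertices is disconnected halfway (with respect to $F$) if either (1) $|T|_0\ge |T|_1$ and every edge joining a vertex of parity 0 in $T$ to a vertex outside $T$ is in $F$, or (2) $|T|_1\ge |T|_0$ and every edge joining a vertex of parity 1 in $T$ to a vertex outside $T$ is in $F$. A CL trap in $Q_n-F$ is a vertex $u$ together with three neighbours $v,w,x$ such that the edges $(u,v),(u,w),(u,x)$ are healthy and each of $v,w,x$ has degree exactly 2 in $Q_n-F$. *)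

theory Defs
  imports Main
begin

definition qverts :: "nat \<Rightarrow> bool list set" where
  "qverts n = {xs. length xs = n}"

definition qadj :: "bool list \<Rightarrow> bool list \<Rightarrow> bool" where
  "qadj u v \<longleftrightarrow> length u = length v \<and> card {i. i < length u \<and> u ! i \<noteq> v ! i} = 1"

definition qedges :: "nat \<Rightarrow> bool list set set" where
  "qedges n = {{u, v} | u v. u \<in> qverts n \<and> v \<in> qverts n \<and> qadj u v}"

definition parity :: "bool list \<Rightarrow> nat" where
  "parity xs = length (filter id xs) mod 2"

definition parcount :: "bool list set \<Rightarrow> nat \<Rightarrow> nat" where
  "parcount T p = card {x \<in> T. parity x = p}"

definition ham_cycle :: "'a set \<Rightarrow> 'a set set \<Rightarrow> 'a list \<Rightarrow> bool" where
  "ham_cycle V E cs \<longleftrightarrow> distinct cs \<and> set cs = V \<and> length cs \<ge> 3 \<and>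
     (\<forall>i < length cs. {cs ! i, cs ! ((i + 1) mod length cs)} \<in> E)"

definition has_ham_cycle :: "'a set \<Rightarrow> 'a set set \<Rightarrow> bool" where
  "has_ham_cycle V E \<longleftrightarrow> (\<exists>cs. ham_cycle V E cs)"

definition minimal_faulty :: "nat \<Rightarrow> bool list set set \<Rightarrow> bool" where
  "minimal_faulty n F \<longleftrightarrow> F \<subseteq> qedges n \<and>
     \<not> has_ham_cycle (qverts n) (qedges n - F) \<and>
     (\<forall>F'. F' \<subset> F \<longrightarrow> has_ham_cycle (qverts n) (qedges n - F'))"

definition disc_halfway :: "nat \<Rightarrow> bool list set set \<Rightarrow> bool list set \<Rightarrow> bool" where
  "disc_halfway n F T \<longleftrightarrow> T \<noteq> {} \<and> T \<subset> qverts n \<and>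
     ((parcount T 0 \<ge> parcount T 1 \<and>
        (\<forall>u \<in> T. \<forall>v. parity u = 0 \<and> v \<notin> T \<and> {u, v} \<in> qedges n \<longrightarrow> {u, v} \<in> F)) \<or>
      (parcount T 1 \<ge> parcount T 0 \<and>
        (\<forall>u \<in> T. \<forall>v. parity u = 1 \<and> v \<notin> T \<and> {u, v} \<in> qedges n \<longrightarrow> {u, v} \<in> F)))"

definition is_subcube :: "nat \<Rightarrow> nat \<Rightarrow> bool list set \<Rightarrow> bool" where
  "is_subcube n k S \<longleftrightarrow> (\<exists>I a. I \<subseteq> {0..<n} \<and> card I = n - k \<and> k \<le> n \<and> a \<in> qverts n \<and>
      S = {x \<in> qverts n. \<forall>i \<in> I. x ! i = a ! i})"

definition has_cycle_in :: "bool list set \<Rightarrow> nat \<Rightarrow> bool" where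
  "has_cycle_in T k \<longleftrightarrow> (\<exists>cs. distinct cs \<and> length cs = k \<and> set cs \<subseteq> T \<and>
      (\<forall>i < k. qadj (cs ! i) (cs ! ((i + 1) mod k))))"

definition hdeg :: "nat \<Rightarrow> bool list set set \<Rightarrow> bool list \<Rightarrow> nat" where
  "hdeg n F v = card {y \<in> qverts n. {v, y} \<in> qedges n - F}"

definition has_CL_trap :: "nat \<Rightarrow> bool list set set \<Rightarrow> bool" where
  "has_CL_trap n F \<longleftrightarrow> (\<exists>u v w x. u \<in> qverts n \<and> v \<noteq> w \<and> v \<noteq> x \<and> w \<noteq> x \<and>
      {u, v} \<in> qedges n - F \<and> {u, w} \<in> qedges n - F \<and> {u, x} \<in> qedges n - F \<and>
      hdeg n F v = 2 \<and> hdeg n F w = 2 \<and> hdeg n F x = 2)"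

end

theory Submission
  imports Defs
begin

definition flip :: "bool list \<Rightarrow> nat \<Rightarrow> bool list" where
  "flip u i = u[i := \<not> u ! i]"

lemma flip_flip [simp]: "flip (flip u i) i = u"
  by (cases "i < length u") (simp_all add: flip_def list_update_beyond)

lemma qadjE:
  assumes "qadj u v"
  obtains i where "i < length u" "v = flip u i"
proof -
  have len: "length v = length u" and one: "card {i. i < length u \<and> u ! i \<noteq> v ! i} = 1"
    using assms by (auto simp: qadj_def)
  obtain i where diff: "{i. i < length u \<and> u ! i \<noteq> v ! i} = {i}"
    using one by (rule card_1_singletonE)
  then have i: "i < length u" "u ! i \<noteq> v ! i" by auto
  have "v ! j = flip u i ! j" if "j < length u" for j
  proof (cases "j = i")
    case False
    then have "u ! j = v ! j" using diff that by blast
    then show ?thesis using False by (simp add: flip_def)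
  qed (use i in \<open>auto simp: flip_def\<close>)
  then have "v = flip u i" by (intro nth_equalityI) (simp_all add: len flip_def)
  with i that show ?thesis by blast
qed

lemma qadj_sym: "qadj u v \<Longrightarrow> qadj v u"
proof -
  assume uv: "qadj u v"
  then have len: "length v = length u" by (simp add: qadj_def)
  then have same_positions:
    "{i. i < length v \<and> v ! i \<noteq> u ! i} = {i. i < length u \<and> u ! i \<noteq> v ! i}"
    by auto
  show "qadj v u" using uv unfolding qadj_def same_positions by (simp add: len)
qed

lemma length_filter_id_update:
  "i < length xs \<Longrightarrow>
     length (filter id (xs[i := b])) + of_bool (xs ! i) = length (filter id xs) + of_bool b"
proof (induction xs arbitrary: i)
  case (Cons x xs)
  then show ?case by (cases i) auto
qed simp

lemma parity_flip: "i < length u \<Longrightarrow> parity (flip u i) \<noteq> parity u"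
proof -
  assume "i < length u"
  then have "length (filter id (flip u i)) = Suc (length (filter id u)) \<or>
      length (filter id u) = Suc (length (filter id (flip u i)))"
    using length_filter_id_update[of i u "\<not> u ! i"] by (cases "u ! i") (simp_all add: flip_def)
  then show ?thesis unfolding parity_def by (elim disjE) (simp_all add: mod_Suc)
qed

lemma qadj_parity: "qadj u v \<Longrightarrow> parity v \<noteq> parity u"
  by (erule qadjE) (simp add: parity_flip)

lemma doubleton_in_qedges_iff: "{u, v} \<in> qedges n \<longleftrightarrow> u \<in> qverts n \<and> v \<in> qverts n \<and> qadj u v"
  by (auto simp: qedges_def doubleton_eq_iff intro: qadj_sym)

lemma finite_qverts: "finite (qverts n)"
  using finite_lists_length_eq[of "UNIV :: bool set" n] by (simp add: qverts_def)

lemma flip_commute: "i \<noteq> j \<Longrightarrow> flip (flip u j) i = flip (flip u i) j"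
  by (simp add: flip_def list_update_swap)

lemma square_is_subcube:
  assumes a: "a \<in> qverts n" and ij: "i < n" "j < n" "i \<noteq> j"
  shows "is_subcube n 2 {a, flip a i, flip a j, flip (flip a i) j}"
proof -
  define I where "I = {0..<n} - {i, j}"
  have len: "length a = n" using a by (simp add: qverts_def)
  have "{x \<in> qverts n. \<forall>l\<in>I. x ! l = a ! l} = {a, flip a i, flip a j, flip (flip a i) j}"
    (is "?S = _")
  proof
    show "?S \<subseteq> {a, flip a i, flip a j, flip (flip a i) j}"
    proof
      fix x assume "x \<in> ?S"
      then have lx: "length x = n" and agree: "\<And>l. l < n \<Longrightarrow> l \<noteq> i \<Longrightarrow> l \<noteq> j \<Longrightarrow> x ! l = a ! l"
        by (auto simp: qverts_def I_def)
      have "x = (if x ! i = a ! i then id else (\<lambda>y. flip y i))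
                  ((if x ! j = a ! j then id else (\<lambda>y. flip y j)) a)"
        by (rule nth_equalityI) (auto simp: lx len flip_def nth_list_update agree ij)
      then show "x \<in> {a, flip a i, flip a j, flip (flip a i) j}"
        by (cases "x ! i = a ! i"; cases "x ! j = a ! j") (simp_all add: flip_commute ij)
    qed
  qed (use a len ij in \<open>auto simp: I_def qverts_def flip_def nth_list_update\<close>)
  moreover have "card I = n - 2" using ij by (simp add: I_def card_Diff_subset)
  ultimately show ?thesis unfolding is_subcube_def using a ij
    by (intro exI[of _ I] exI[of _ a]) (auto simp: I_def)
qed

lemma four_cycle_is_subcube:
  assumes a: "a \<in> qverts n" and adj: "qadj a c" "qadj a d" "qadj b c" "qadj b d"
    and "a \<noteq> b" "c \<noteq> d"
  shows "is_subcube n 2 {a, b, c, d}"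
proof -
  have len: "length a = n" using a by (simp add: qverts_def)
  obtain i j where i: "i < n" "c = flip a i" and j: "j < n" "d = flip a j"
    using adj(1,2) len by (metis qadjE)
  obtain i' j' where i': "b = flip c i'" and j': "b = flip d j'"
    using adj(3,4) by (metis qadjE qadj_sym)
  have ij: "i \<noteq> j" using \<open>c \<noteq> d\<close> i j by auto
  have "j' \<noteq> j" using j j' \<open>a \<noteq> b\<close> by auto
  have "i' = j"
  proof (rule ccontr)
    assume "i' \<noteq> j"
    then have "b ! j = a ! j" using i i' ij by (simp add: flip_def)
    moreover have "b ! j = (\<not> a ! j)" using j j' \<open>j' \<noteq> j\<close> len by (simp add: flip_def)
    ultimately show False by simp
  qed
  then have "{a, b, c, d} = {a, flip a i, flip a j, flip (flip a i) j}"
    using i i' j by auto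
  then show ?thesis using square_is_subcube[OF a i(1) j(1) ij] by simp
qed

lemma ham_cycle_leaves:
  assumes hc: "ham_cycle V E cs" and "S \<noteq> {}" "S \<subset> V"
  shows "\<exists>i < length cs. cs ! i \<in> S \<and> cs ! (Suc i mod length cs) \<notin> S"
proof (rule ccontr)
  let ?N = "length cs"
  assume "\<not> ?thesis"
  then have closed: "cs ! (Suc i mod ?N) \<in> S" if "i < ?N" "cs ! i \<in> S" for i
    using that by blast
  have set: "set cs = V" and N: "0 < ?N" using hc by (auto simp: ham_cycle_def)
  obtain v where v: "v \<in> S" using \<open>S \<noteq> {}\<close> by blast
  then have "v \<in> set cs" using \<open>S \<subset> V\<close> set by blast
  then obtain i0 where i0: "i0 < ?N" "cs ! i0 \<in> S" using v by (metis in_set_conv_nth)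
  have all: "cs ! ((i0 + m) mod ?N) \<in> S" for m
  proof (induction m)
    case (Suc m)
    then show ?case using closed[of "(i0 + m) mod ?N"] N by (simp add: mod_Suc_eq)
  qed (use i0 in simp)
  have "V \<subseteq> S"
  proof
    fix v assume "v \<in> V"
    then obtain i where "i < ?N" "cs ! i = v" using set by (auto simp: in_set_conv_nth)
    with all[of "?N - i0 + i"] i0(1) show "v \<in> S" by simp
  qed
  then show False using \<open>S \<subset> V\<close> by blast
qed

lemma image_subset_by_card:
  assumes "finite Y" "inj_on s Y" "\<forall>x\<in>X. \<exists>y\<in>Y. s y = x" "card Y \<le> card X"
  shows "s ` Y \<subseteq> X"
proof -
  define Y' where "Y' = {y \<in> Y. s y \<in> X}"
  have "Y' \<subseteq> Y" by (auto simp: Y'_def)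
  have "s ` Y' = X" using assms(3) by (auto simp: Y'_def)
  then have "card Y' = card X"
    using card_image[OF inj_on_subset[OF assms(2) \<open>Y' \<subseteq> Y\<close>]] by simp
  then have "Y' = Y" using card_seteq[OF assms(1) \<open>Y' \<subseteq> Y\<close>] assms(4) by simp
  then show ?thesis by (auto simp: Y'_def)
qed

lemma inj_on_Suc_mod: "inj_on (\<lambda>i. Suc i mod N) {..<N}"
  by (auto simp: inj_on_def mod_Suc split: if_splits)

lemma Suc_mod_surj: "x < N \<Longrightarrow> \<exists>y<N. Suc y mod N = x"
proof (cases x)
  case 0
  then show "x < N \<Longrightarrow> ?thesis" by (intro exI[of _ "N - 1"]) simp
next
  case (Suc y)
  then show "x < N \<Longrightarrow> ?thesis" by (intro exI[of _ y]) simp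
qed

lemma card_positions:
  "distinct xs \<Longrightarrow> card {i. i < length xs \<and> P (xs ! i)} = card {x \<in> set xs. P x}"
proof -
  assume "distinct xs"
  then have "inj_on (nth xs) {i. i < length xs \<and> P (xs ! i)}" by (simp add: inj_on_nth)
  moreover have "nth xs ` {i. i < length xs \<and> P (xs ! i)} = {x \<in> set xs. P x}"
    by (auto simp: in_set_conv_nth)
  ultimately show ?thesis by (simp add: card_image[symmetric])
qed

definition disc_side :: "nat \<Rightarrow> bool list set set \<Rightarrow> nat \<Rightarrow> bool list set \<Rightarrow> bool" where
  "disc_side n F p T \<longleftrightarrow>
     card {x \<in> T. parity x \<noteq> p} \<le> card {x \<in> T. parity x = p} \<and>
     (\<forall>u\<in>T. \<forall>v. parity u = p \<and> v \<notin> T \<and> {u, v} \<in> qedges n \<longrightarrow> {u, v} \<in> F)"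

lemma disc_halfway_iff:
  "disc_halfway n F T \<longleftrightarrow> T \<noteq> {} \<and> T \<subset> qverts n \<and> (\<exists>p<2. disc_side n F p T)"
proof -
  have "{x \<in> T. parity x \<noteq> 0} = {x \<in> T. parity x = 1}" "{x \<in> T. parity x \<noteq> 1} = {x \<in> T. parity x = 0}"
    by (auto simp: parity_def)
  moreover have "(\<exists>p<2. P p) \<longleftrightarrow> P 0 \<or> P 1" for P :: "nat \<Rightarrow> bool"
    by (auto simp: less_2_cases_iff)
  ultimately show ?thesis
    unfolding disc_halfway_def disc_side_def parcount_def by (simp only:)
qed

lemma disc_side_healthy_edge:
  assumes "disc_side n F p T" "u \<in> T" "parity u = p" "{u, v} \<in> qedges n - F"
  shows "v \<in> T \<and> parity v \<noteq> p"
  using assms qadj_parity by (fastforce simp: disc_side_def doubleton_in_qedges_iff)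

lemma disc_side_no_ham_cycle:
  assumes side: "disc_side n F p T" and "T \<noteq> {}" "T \<subset> qverts n"
  shows "\<not> ham_cycle (qverts n) (qedges n - F) cs"
proof
  assume hc: "ham_cycle (qverts n) (qedges n - F) cs"
  let ?N = "length cs" and ?s = "\<lambda>i. Suc i mod length cs"
  define X where "X = {i. i < ?N \<and> cs ! i \<in> T \<and> parity (cs ! i) = p}"
  define Y where "Y = {i. i < ?N \<and> cs ! i \<in> T \<and> parity (cs ! i) \<noteq> p}"
  have distinct: "distinct cs" and set: "set cs = qverts n" and N: "0 < ?N"
    and edge: "\<And>i. i < ?N \<Longrightarrow> {cs ! i, cs ! ?s i} \<in> qedges n - F"
    using hc by (auto simp: ham_cycle_def)
  have succ: "?s i \<in> Y" if "i \<in> X" for i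
  proof -
    from that have i: "i < ?N" "cs ! i \<in> T" "parity (cs ! i) = p" by (simp_all add: X_def)
    have "cs ! ?s i \<in> T \<and> parity (cs ! ?s i) \<noteq> p"
      by (rule disc_side_healthy_edge[OF side i(2,3) edge[OF i(1)]])
    then show ?thesis using N by (simp add: Y_def)
  qed
  have pred: "\<exists>y\<in>Y. ?s y = x" if x: "x \<in> X" for x
  proof -
    obtain y where y: "y < ?N" "?s y = x" using x Suc_mod_surj by (auto simp: X_def)
    then have "{cs ! x, cs ! y} \<in> qedges n - F" using edge[of y] by (simp add: insert_commute)
    moreover have "cs ! x \<in> T" "parity (cs ! x) = p" using x by (simp_all add: X_def)
    ultimately have "cs ! y \<in> T \<and> parity (cs ! y) \<noteq> p"
      using disc_side_healthy_edge[OF side] by blast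
    then have "y \<in> Y" using y(1) by (simp add: Y_def)
    with y show ?thesis by blast
  qed
  have "{x \<in> set cs. x \<in> T \<and> Q x} = {x \<in> T. Q x}" for Q
    using set \<open>T \<subset> qverts n\<close> by auto
  then have "card X = card {x \<in> T. parity x = p}" "card Y = card {x \<in> T. parity x \<noteq> p}"
    using card_positions[OF distinct, of "\<lambda>x. x \<in> T \<and> parity x = p"]
      card_positions[OF distinct, of "\<lambda>x. x \<in> T \<and> parity x \<noteq> p"]
    by (simp_all add: X_def Y_def)
  then have "card Y \<le> card X" using side by (simp add: disc_side_def)
  moreover have "inj_on ?s Y" by (rule inj_on_subset[OF inj_on_Suc_mod]) (auto simp: Y_def)
  moreover have "finite Y" by (simp add: Y_def)
  ultimately have "?s ` Y \<subseteq> X" using pred by (intro image_subset_by_card) auto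
  with succ have closed: "?s i \<in> X \<union> Y" if "i \<in> X \<union> Y" for i
    using that by blast
  obtain i where "i < ?N" "cs ! i \<in> T" "cs ! ?s i \<notin> T"
    using ham_cycle_leaves[OF hc \<open>T \<noteq> {}\<close> \<open>T \<subset> qverts n\<close>] by blast
  then show False using closed[of i] by (auto simp: X_def Y_def)
qed

definition positive_surplus :: "nat \<Rightarrow> (nat \<Rightarrow> nat \<Rightarrow> bool) \<Rightarrow> bool" where
  "positive_surplus k r \<longleftrightarrow>
     (\<forall>A. A \<subset> {..<k} \<longrightarrow> A \<noteq> {} \<longrightarrow> card A < card {j \<in> {..<k}. \<exists>i\<in>A. r i j})"

definition degree :: "nat \<Rightarrow> (nat \<Rightarrow> nat \<Rightarrow> bool) \<Rightarrow> nat \<Rightarrow> nat" where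
  "degree k r i = card {j \<in> {..<k}. r i j}"

lemma positive_surplus_clauses:
  assumes "positive_surplus k r"
  shows "\<forall>A\<in>Pow {..<k}. \<forall>S\<in>Pow {..<k}. A \<noteq> {} \<longrightarrow> (\<exists>i\<in>{..<k}. i \<notin> A) \<longrightarrow> card S = card A \<longrightarrow>
           (\<exists>i\<in>A. \<exists>j\<in>{..<k} - S. r i j)"
proof (intro ballI impI)
  fix A S
  assume A: "A \<in> Pow {..<k}" "A \<noteq> {}" "\<exists>i\<in>{..<k}. i \<notin> A" and S: "S \<in> Pow {..<k}" "card S = card A"
  have "A \<subset> {..<k}" using A by auto
  then have less: "card A < card {j \<in> {..<k}. \<exists>i\<in>A. r i j}"
    using assms A(2) unfolding positive_surplus_def by blast
  have "finite S" using S(1) finite_subset by auto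
  show "\<exists>i\<in>A. \<exists>j\<in>{..<k} - S. r i j"
  proof (rule ccontr)
    assume "\<not> ?thesis"
    then have "{j \<in> {..<k}. \<exists>i\<in>A. r i j} \<subseteq> S" by blast
    from card_mono[OF \<open>finite S\<close> this] show False using less S(2) by simp
  qed
qed

lemma degree_eq_2I:
  assumes "a < k" "b < k" "a \<noteq> b" "r i a" "r i b" "\<forall>l\<in>{..<k} - {a, b}. \<not> r i l"
  shows "degree k r i = 2"
proof -
  have "{j \<in> {..<k}. r i j} = {a, b}" using assms by auto
  then show ?thesis using assms(3) by (simp add: degree_def)
qed

lemma positive_surplus_2_complete:
  assumes "positive_surplus 2 r"
  shows "r 0 0 \<and> r 0 1 \<and> r 1 0 \<and> r 1 1"
proof -
  have two: "{..<2::nat} = {0, 1}" by auto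
  show ?thesis using positive_surplus_clauses[OF assms] unfolding two
    by (simp add: Pow_insert insert_Diff_if)
qed

lemma positive_surplus_3_cycle:
  assumes "positive_surplus 3 r"
  shows "\<exists>b\<in>{..<3} - {0}. \<exists>c\<in>{..<3} - {0, b}. \<exists>x\<in>{..<3}. \<exists>y\<in>{..<3} - {x}. \<exists>z\<in>{..<3} - {x, y}.
           r 0 x \<and> r b x \<and> r b y \<and> r c y \<and> r c z \<and> r 0 z"
proof -
  have three: "{..<3::nat} = {0, 1, 2}" by auto
  show ?thesis using positive_surplus_clauses[OF assms] unfolding three
    by (simp (no_asm_use) add: Pow_insert insert_Diff_if) sat
qed

lemma positive_surplus_4_cycle_or_trap:
  assumes "positive_surplus 4 r"
  shows "(\<exists>b\<in>{..<4} - {0}. \<exists>c\<in>{..<4} - {0, b}. \<exists>d\<in>{..<4} - {0, b, c}.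
          \<exists>w\<in>{..<4}. \<exists>x\<in>{..<4} - {w}. \<exists>y\<in>{..<4} - {w, x}. \<exists>z\<in>{..<4} - {w, x, y}.
            r 0 w \<and> r b w \<and> r b x \<and> r c x \<and> r c y \<and> r d y \<and> r d z \<and> r 0 z) \<or>
         (\<exists>j\<in>{..<4}. \<exists>m\<in>{..<4}. \<forall>i\<in>{..<4} - {m}. r i j \<and> degree 4 r i = 2)"
proof -
  have degree_2: "\<forall>i\<in>{..<4}. \<forall>a\<in>{..<4}. \<forall>b\<in>{..<4} - {a}.
      r i a \<longrightarrow> r i b \<longrightarrow> (\<forall>l\<in>{..<4} - {a, b}. \<not> r i l) \<longrightarrow> degree 4 r i = 2"
  proof (intro ballI impI)
    fix i a b
    assume "a \<in> {..<4}" "b \<in> {..<4} - {a}" "r i a" "r i b" "\<forall>l\<in>{..<4} - {a, b}. \<not> r i l"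
    then show "degree 4 r i = 2" by (intro degree_eq_2I[of a 4 b]) auto
  qed
  have four: "{..<4::nat} = {0, 1, 2, 3}" by auto
  show ?thesis using positive_surplus_clauses[OF assms] degree_2 unfolding four
    by (simp (no_asm_use) add: Pow_insert insert_Diff_if) sat
qed

lemma has_cycle_in_if_successively:
  assumes "distinct cs" "set cs \<subseteq> T" "successively qadj cs" "qadj (last cs) (hd cs)" "cs \<noteq> []"
  shows "has_cycle_in T (length cs)"
  unfolding has_cycle_in_def
proof (intro exI[of _ cs] conjI allI impI)
  fix i assume i: "i < length cs"
  show "qadj (cs ! i) (cs ! ((i + 1) mod length cs))"
  proof (cases "Suc i < length cs")
    case True
    then show ?thesis using successively_nth[OF assms(3)] by simp
  next
    case False
    then have "i = length cs - 1" using i by simp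
    then show ?thesis using assms(4,5) by (simp add: last_conv_nth hd_conv_nth)
  qed
qed (use assms in auto)


locale minimal_disc_side =
  fixes n :: nat and F :: "bool list set set" and p :: nat and T :: "bool list set"
  assumes minimal_faulty: "minimal_faulty n F"
    and side: "disc_side n F p T"
    and nonempty: "T \<noteq> {}"
    and proper: "T \<subset> qverts n"
    and parity_less_2: "p < 2"
    and minimal: "\<forall>T'. T' \<subset> T \<longrightarrow> \<not> disc_halfway n F T'"
begin

lemma finite_T: "finite T"
  using proper finite_qverts finite_subset by blast

lemma faulty_edge_leaves:
  assumes "e \<in> F"
  shows "\<exists>u v. e = {u, v} \<and> u \<in> T \<and> parity u = p \<and> v \<notin> T"
proof (rule ccontr)
  assume "\<not> ?thesis"
  then have "disc_side n (F - {e}) p T" using side by (auto simp: disc_side_def)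
  moreover obtain cs where "ham_cycle (qverts n) (qedges n - (F - {e})) cs"
    using minimal_faulty \<open>e \<in> F\<close> unfolding minimal_faulty_def has_ham_cycle_def by blast
  ultimately show False using disc_side_no_ham_cycle nonempty proper by blast
qed

lemma edge_within_healthy: "u \<in> T \<Longrightarrow> v \<in> T \<Longrightarrow> {u, v} \<notin> F"
  using faulty_edge_leaves by (fastforce simp: doubleton_eq_iff)

lemma healthy_neighbours:
  assumes "e \<in> T" "parity e = p"
  shows "{y \<in> qverts n. {e, y} \<in> qedges n - F} = {y \<in> T. parity y \<noteq> p \<and> qadj e y}"
proof
  show "{y \<in> qverts n. {e, y} \<in> qedges n - F} \<subseteq> {y \<in> T. parity y \<noteq> p \<and> qadj e y}"
    using disc_side_healthy_edge[OF side assms] by (auto simp: doubleton_in_qedges_iff)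
  show "{y \<in> T. parity y \<noteq> p \<and> qadj e y} \<subseteq> {y \<in> qverts n. {e, y} \<in> qedges n - F}"
    using assms(1) proper edge_within_healthy by (auto simp: doubleton_in_qedges_iff)
qed

lemma card_less_card_neighbours:
  assumes A: "A \<subseteq> {x \<in> T. parity x = p}" "A \<noteq> {}" "A \<noteq> {x \<in> T. parity x = p}"
  shows "card A < card {y \<in> T. parity y \<noteq> p \<and> (\<exists>e\<in>A. qadj e y)}"
proof (rule ccontr)
  define N where "N = {y \<in> T. parity y \<noteq> p \<and> (\<exists>e\<in>A. qadj e y)}"
  assume "\<not> card A < card {y \<in> T. parity y \<noteq> p \<and> (\<exists>e\<in>A. qadj e y)}"
  then have "card N \<le> card A" by (simp add: N_def)
  moreover have "{x \<in> A \<union> N. parity x = p} = A" "{x \<in> A \<union> N. parity x \<noteq> p} = N"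
    using A(1) by (auto simp: N_def)
  moreover have "{u, v} \<in> F" if "u \<in> A" "v \<notin> A \<union> N" "{u, v} \<in> qedges n" for u v
  proof -
    have "qadj u v" using that(3) by (simp add: doubleton_in_qedges_iff)
    moreover have "parity u = p" using that(1) A(1) by auto
    ultimately have "parity v \<noteq> p" using qadj_parity by metis
    then have "v \<notin> T" using that(1,2) \<open>qadj u v\<close> by (auto simp: N_def)
    then show ?thesis using side that A(1) by (auto simp: disc_side_def)
  qed
  ultimately have "disc_side n F p (A \<union> N)" unfolding disc_side_def by auto
  moreover have "A \<union> N \<subset> T" using A by (auto simp: N_def)
  ultimately have "disc_halfway n F (A \<union> N)"
    using A(2) proper parity_less_2 by (auto simp: disc_halfway_iff)
  then show False using minimal \<open>A \<union> N \<subset> T\<close> by blast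
qed

lemma card_sides: "card {x \<in> T. parity x = p} + card {x \<in> T. parity x \<noteq> p} = card T"
  using finite_T by (subst card_Un_disjoint[symmetric]) (auto intro: arg_cong[where f = card])

lemma balanced:
  assumes "even (card T)"
  shows "card {x \<in> T. parity x = p} = card {x \<in> T. parity x \<noteq> p}"
proof (rule ccontr)
  let ?P = "{x \<in> T. parity x = p}" and ?O = "{x \<in> T. parity x \<noteq> p}"
  assume "card ?P \<noteq> card ?O"
  moreover note card_sides
  moreover have "card ?O \<le> card ?P" using side by (simp add: disc_side_def)
  ultimately have "card ?O + 1 < card ?P" using assms by presburger
  then obtain A where A: "A \<subseteq> ?P" "card A = card ?O + 1"
    by (meson less_imp_le obtain_subset_with_card_n)
  then have "A \<noteq> {}" "A \<noteq> ?P" using \<open>card ?O + 1 < card ?P\<close> by auto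
  then have "card A < card {y \<in> T. parity y \<noteq> p \<and> (\<exists>e\<in>A. qadj e y)}"
    using card_less_card_neighbours A(1) by blast
  also have "\<dots> \<le> card ?O" using finite_T by (intro card_mono) auto
  finally show False using A(2) by simp
qed

end

locale enumerated_disc_side = minimal_disc_side +
  fixes k :: nat and f g :: "nat \<Rightarrow> bool list"
  assumes bij_f: "bij_betw f {..<k} {x \<in> T. parity x = p}"
    and bij_g: "bij_betw g {..<k} {x \<in> T. parity x \<noteq> p}"
begin

abbreviation adj :: "nat \<Rightarrow> nat \<Rightarrow> bool" where
  "adj i j \<equiv> qadj (f i) (g j)"

lemma f_in: "i < k \<Longrightarrow> f i \<in> T \<and> parity (f i) = p"
  using bij_betwE[OF bij_f] by blast

lemma g_in: "j < k \<Longrightarrow> g j \<in> T \<and> parity (g j) \<noteq> p"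
  using bij_betwE[OF bij_g] by blast

lemma f_eq_iff: "i < k \<Longrightarrow> i' < k \<Longrightarrow> f i = f i' \<longleftrightarrow> i = i'"
  using bij_betw_imp_inj_on[OF bij_f] by (auto simp: inj_on_def)

lemma g_eq_iff: "j < k \<Longrightarrow> j' < k \<Longrightarrow> g j = g j' \<longleftrightarrow> j = j'"
  using bij_betw_imp_inj_on[OF bij_g] by (auto simp: inj_on_def)

lemma f_neq_g: "i < k \<Longrightarrow> j < k \<Longrightarrow> f i \<noteq> g j"
  using f_in[of i] g_in[of j] by auto

lemma T_eq: "T = f ` {..<k} \<union> g ` {..<k}"
  using bij_betw_imp_surj_on[OF bij_f] bij_betw_imp_surj_on[OF bij_g] by auto

lemma neighbours_eq:
  "{y \<in> T. parity y \<noteq> p \<and> (\<exists>e\<in>f ` A. qadj e y)} = g ` {j \<in> {..<k}. \<exists>i\<in>A. adj i j}"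
proof (intro equalityI subsetI)
  fix y assume y: "y \<in> {y \<in> T. parity y \<noteq> p \<and> (\<exists>e\<in>f ` A. qadj e y)}"
  then have "y \<in> g ` {..<k}" using bij_betw_imp_surj_on[OF bij_g] by simp
  then obtain j where "j < k" "y = g j" by blast
  moreover obtain i where "i \<in> A" "qadj (f i) y" using y by blast
  ultimately show "y \<in> g ` {j \<in> {..<k}. \<exists>i\<in>A. adj i j}" by blast
qed (use g_in in auto)

lemma positive_surplus_adj: "positive_surplus k adj"
  unfolding positive_surplus_def
proof (intro allI impI)
  fix A assume A: "A \<subset> {..<k}" "A \<noteq> {}"
  obtain i where i: "i < k" "i \<notin> A" using A(1) by auto
  have "f i \<notin> f ` A"
  proof
    assume "f i \<in> f ` A"
    then obtain a where "a \<in> A" "f i = f a" by blast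
    then show False using f_eq_iff[of i a] i A(1) by auto
  qed
  then have "f ` A \<noteq> {x \<in> T. parity x = p}" using f_in[OF i(1)] by blast
  moreover have "f ` A \<subseteq> {x \<in> T. parity x = p}" "f ` A \<noteq> {}" using A f_in by auto
  ultimately have "card (f ` A) < card {y \<in> T. parity y \<noteq> p \<and> (\<exists>e\<in>f ` A. qadj e y)}"
    by (intro card_less_card_neighbours)
  then have "card (f ` A) < card (g ` {j \<in> {..<k}. \<exists>i\<in>A. adj i j})"
    by (simp only: neighbours_eq)
  moreover have "inj_on f A"
    using inj_on_subset[OF bij_betw_imp_inj_on[OF bij_f] psubset_imp_subset[OF A(1)]] .
  moreover have "inj_on g {j \<in> {..<k}. \<exists>i\<in>A. adj i j}"
    by (rule inj_on_subset[OF bij_betw_imp_inj_on[OF bij_g]]) auto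
  ultimately show "card A < card {j \<in> {..<k}. \<exists>i\<in>A. adj i j}"
    by (simp add: card_image)
qed

lemma hdeg_f: "i < k \<Longrightarrow> hdeg n F (f i) = degree k adj i"
proof -
  assume i: "i < k"
  have "{y \<in> qverts n. {f i, y} \<in> qedges n - F} = g ` {j \<in> {..<k}. adj i j}"
    using healthy_neighbours[of "f i"] f_in[OF i] neighbours_eq[of "{i}"] by simp
  moreover have "inj_on g {j \<in> {..<k}. adj i j}"
    by (rule inj_on_subset[OF bij_betw_imp_inj_on[OF bij_g]]) auto
  ultimately show ?thesis by (simp add: hdeg_def degree_def card_image)
qed

lemma healthy_edge:
  assumes "i < k" "j < k" "adj i j"
  shows "{g j, f i} \<in> qedges n - F"
proof -
  have T: "g j \<in> T" "f i \<in> T" using f_in g_in assms by auto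
  then have "g j \<in> qverts n" "f i \<in> qverts n" using psubsetD[OF proper] by simp_all
  then have "{g j, f i} \<in> qedges n" using qadj_sym[OF assms(3)] by (simp add: doubleton_in_qedges_iff)
  then show ?thesis using edge_within_healthy[OF T] by simp
qed

lemma subcube_if_2: "k = 2 \<Longrightarrow> is_subcube n 2 T"
proof -
  assume k: "k = 2"
  have "positive_surplus 2 adj" using positive_surplus_adj k by simp
  then have adj: "adj 0 0" "adj 0 1" "adj 1 0" "adj 1 1"
    using positive_surplus_2_complete by blast+
  have "{..<k} = {0, 1}" using k by auto
  then have "T = {f 0, f 1, g 0, g 1}" using T_eq by auto
  moreover have "f 0 \<in> qverts n" using f_in[of 0] k psubsetD[OF proper] by simp
  moreover have "f 0 \<noteq> f 1" "g 0 \<noteq> g 1" using f_eq_iff[of 0 1] g_eq_iff[of 0 1] k by auto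
  ultimately show ?thesis using four_cycle_is_subcube[of "f 0" n "g 0" "g 1" "f 1"] adj by simp
qed

lemma cycle_if_3: "k = 3 \<Longrightarrow> has_cycle_in T 6"
proof -
  assume k: "k = 3"
  have "positive_surplus 3 adj" using positive_surplus_adj k by simp
  then obtain b c x y z where idx: "b \<in> {..<3} - {0}" "c \<in> {..<3} - {0, b}"
      "x \<in> {..<3}" "y \<in> {..<3} - {x}" "z \<in> {..<3} - {x, y}"
    and adj: "adj 0 x" "adj b x" "adj b y" "adj c y" "adj c z" "adj 0 z"
    by (blast dest: positive_surplus_3_cycle)
  let ?cs = "[f 0, g x, f b, g y, f c, g z]"
  have "has_cycle_in T (length ?cs)"
  proof (rule has_cycle_in_if_successively)
    show "distinct ?cs" using idx k f_eq_iff g_eq_iff f_neq_g f_neq_g[THEN not_sym] by auto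
    show "set ?cs \<subseteq> T" using idx k f_in g_in by auto
    show "successively qadj ?cs" "qadj (last ?cs) (hd ?cs)" using adj qadj_sym by simp_all
  qed simp
  then show ?thesis by (simp add: numeral_eq_Suc)
qed

lemma cycle_or_trap_if_4: "k = 4 \<Longrightarrow> has_cycle_in T 8 \<or> has_CL_trap n F"
proof -
  assume k: "k = 4"
  have "positive_surplus 4 adj" using positive_surplus_adj k by simp
  from positive_surplus_4_cycle_or_trap[OF this] show ?thesis
  proof (elim disjE)
    assume "\<exists>b\<in>{..<4} - {0}. \<exists>c\<in>{..<4} - {0, b}. \<exists>d\<in>{..<4} - {0, b, c}.
      \<exists>w\<in>{..<4}. \<exists>x\<in>{..<4} - {w}. \<exists>y\<in>{..<4} - {w, x}. \<exists>z\<in>{..<4} - {w, x, y}.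
        adj 0 w \<and> adj b w \<and> adj b x \<and> adj c x \<and> adj c y \<and> adj d y \<and> adj d z \<and> adj 0 z"
    then obtain b c d w x y z where idx: "b \<in> {..<4} - {0}" "c \<in> {..<4} - {0, b}"
        "d \<in> {..<4} - {0, b, c}" "w \<in> {..<4}" "x \<in> {..<4} - {w}" "y \<in> {..<4} - {w, x}"
        "z \<in> {..<4} - {w, x, y}"
      and adj: "adj 0 w" "adj b w" "adj b x" "adj c x" "adj c y" "adj d y" "adj d z" "adj 0 z"
      by blast
    let ?cs = "[f 0, g w, f b, g x, f c, g y, f d, g z]"
    have "has_cycle_in T (length ?cs)"
    proof (rule has_cycle_in_if_successively)
      show "distinct ?cs" using idx k f_eq_iff g_eq_iff f_neq_g f_neq_g[THEN not_sym] by auto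
      show "set ?cs \<subseteq> T" using idx k f_in g_in by auto
      show "successively qadj ?cs" "qadj (last ?cs) (hd ?cs)" using adj qadj_sym by simp_all
    qed simp
    then show ?thesis by (simp add: numeral_eq_Suc)
  next
    assume "\<exists>j\<in>{..<4}. \<exists>m\<in>{..<4}. \<forall>i\<in>{..<4} - {m}. adj i j \<and> degree 4 adj i = 2"
    then obtain j m where "j < 4" "m < 4" and trap: "\<forall>i\<in>{..<4} - {m}. adj i j \<and> degree 4 adj i = 2"
      by blast
    have "card ({..<4::nat} - {m}) = 3" using \<open>m < 4\<close> by simp
    then obtain a b c where abc: "{..<4} - {m} = {a, b, c}" "a \<noteq> b" "b \<noteq> c" "a \<noteq> c"
      by (auto simp: card_3_iff)
    then have idx: "a < k" "b < k" "c < k" using k by auto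
    have "g j \<in> qverts n" using g_in[of j] \<open>j < 4\<close> k psubsetD[OF proper] by simp
    moreover have "{g j, f i} \<in> qedges n - F \<and> hdeg n F (f i) = 2" if "i \<in> {a, b, c}" for i
    proof -
      have i: "i < k" "i \<in> {..<4} - {m}" using that idx abc(1) by auto
      then have "adj i j" "degree 4 adj i = 2" using trap by auto
      then show ?thesis using healthy_edge[OF i(1)] hdeg_f[OF i(1)] \<open>j < 4\<close> k by simp
    qed
    moreover have "f a \<noteq> f b" "f b \<noteq> f c" "f a \<noteq> f c" using idx abc f_eq_iff by auto
    ultimately have "has_CL_trap n F" unfolding has_CL_trap_def by blast
    then show ?thesis ..
  qed
qed

end

context minimal_disc_side
begin

lemma enumeration_exists:
  assumes "card T = 2 * k"
  shows "\<exists>f g. enumerated_disc_side n F p T k f g"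
proof -
  have card: "card {..<k} = card {x \<in> T. parity x = p}" "card {..<k} = card {x \<in> T. parity x \<noteq> p}"
    using balanced card_sides assms by auto
  have finite: "finite {x \<in> T. parity x = p}" "finite {x \<in> T. parity x \<noteq> p}"
    using finite_T by simp_all
  obtain f where "bij_betw f {..<k} {x \<in> T. parity x = p}"
    using finite_same_card_bij[OF finite_lessThan finite(1) card(1)] by blast
  moreover obtain g where "bij_betw g {..<k} {x \<in> T. parity x \<noteq> p}"
    using finite_same_card_bij[OF finite_lessThan finite(2) card(2)] by blast
  ultimately show ?thesis
    by (blast intro: enumerated_disc_side.intro minimal_disc_side_axioms enumerated_disc_side_axioms.intro)
qed

lemma subcube_if_card_4: "card T = 4 \<Longrightarrow> is_subcube n 2 T"
  using enumeration_exists[of 2] enumerated_disc_side.subcube_if_2 by fastforce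

lemma cycle_if_card_6: "card T = 6 \<Longrightarrow> has_cycle_in T 6"
  using enumeration_exists[of 3] enumerated_disc_side.cycle_if_3 by fastforce

lemma cycle_or_trap_if_card_8: "card T = 8 \<Longrightarrow> has_cycle_in T 8 \<or> has_CL_trap n F"
  using enumeration_exists[of 4] enumerated_disc_side.cycle_or_trap_if_4 by fastforce

end

theorem lemma5:
  fixes n :: nat and F :: "bool list set set" and T :: "bool list set"
  assumes "n \<ge> 3"
    and "minimal_faulty n F"
    and "disc_halfway n F T"
    and "\<forall>T'. T' \<subset> T \<longrightarrow> \<not> disc_halfway n F T'"
  shows "(card T = 4 \<longrightarrow> is_subcube n 2 T)
       \<and> (card T = 6 \<longrightarrow> has_cycle_in T 6)
       \<and> (card T = 8 \<longrightarrow> has_cycle_in T 8 \<or> has_CL_trap n F)"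
proof -
  obtain p where "p < 2" "disc_side n F p T" using assms(3) by (auto simp: disc_halfway_iff)
  then interpret minimal_disc_side n F p T
    using assms(2-4) by unfold_locales (auto simp: disc_halfway_iff)
  show ?thesis using subcube_if_card_4 cycle_if_card_6 cycle_or_trap_if_card_8 by blast
qed

end
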